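(* Fix $\delta>0$ and let $c_2$ be a constant such that $p(x,y):=p^0_{\epsilon^{-2}\delta}(x,y)\le c_2\epsilon/\sqrt\delta$ for all $\epsilon$ and all $x,y\in\{0,\dots,\epsilon^{-1}\}$. Let $c^*>0$, $a^*>0$ and $$\mathcal X_{c^*,a^*}=\Big\{\xi:\ |\xi|\le c^*\epsilon^{-1},\ \max_{x\neq0}\xi(x)\le\epsilon^{-a^*}\Big\}.$$ Then for every $\xi\in\mathcal X_{c^*,a^*}$, $\max_{x\in\{0,\dots,\epsilon^{-1}\}}w(x|\xi)\le c_2c^*/\sqrt\delta$. Moreover, let $b>0$ with $a^*<b/2$ and $b+a^*<1$, and $\ell=\lfloor\epsilon^{-b}\rfloor$. Then for every integer $n$ there is $c'_n$ such that for all $\xi\in\mathcal X_{c^*,a^*}$ $$P_\xi\big[\xi^0_{\epsilon^{-2}\delta}\in\mathcal X_{c^*,a^*}\big]\ge1-c'_n\epsilon^n,$$ and there is a constant $c$ such that for all $\xi\in\mathcal X_{c^*,a^*}$ $$\sup_{x\le\epsilon^{-1}-\ell+1}E_\xi\Big[\big|\mathcal A_\ell(x,\xi^0_{\epsilon^{-2}\delta})-\mathcal A_\ell(x,w(\cdot|\xi))\big|^4\Big]\le c\,\epsilon^{2b}.$$ (The constants $c'_n$, $c$ do not depend on $\epsilon$ or $\xi$.)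
   Context: $\epsilon>0$ with $\epsilon^{-1}\in\mathbb N$; configurations $\xi:\{0,\dots,\epsilon^{-1}\}\to\mathbb N$, $|\xi|=\sum_x\xi(x)$. $p^0_t(x,y)$ is the transition probability of a continuous time simple symmetric random walk on $\{0,\dots,\epsilon^{-1}\}$ which jumps by $\pm1$ with equal probability after exponential times of mean $1$, jumps leading outside the interval being suppressed. $(\xi^0_t)$ is the process of independent such random walks, with law $P_\xi$ and expectation $E_\xi$ when started from $\xi$. $w(x|\xi)=E_\xi[\xi^0_{\epsilon^{-2}\delta}(x)]=\sum_yp^0_{\epsilon^{-2}\delta}(x,y)\xi(y)$. $\mathcal A_\ell(x,f)=\frac1\ell\sum_{y=x}^{x+\ell-1}f(y)$. *)

theory Defs
  imports "HOL-Probability.Probability"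
begin

text \<open>Interval {0..N} with N = 1/epsilon. One attempted jump: +1 or -1 with
  probability 1/2 each; a jump leading outside {0..N} is suppressed (walk stays).\<close>
definition rw_step :: "nat \<Rightarrow> nat \<Rightarrow> nat pmf" where
  "rw_step N y = map_pmf (\<lambda>b. if b then (if y < N then y + 1 else y)
                                   else (if 0 < y then y - 1 else y)) (bernoulli_pmf (1/2))"

text \<open>Continuous-time walk at time t: jump attempts after Exp(1) times, so the number
  of attempts up to time t is Poisson(t).\<close>
definition rw_law :: "nat \<Rightarrow> real \<Rightarrow> nat \<Rightarrow> nat pmf" where
  "rw_law N t x = bind_pmf (poisson_pmf t) (\<lambda>k. ((\<lambda>q. bind_pmf q (rw_step N)) ^^ k) (return_pmf x))"

definition p0 :: "nat \<Rightarrow> real \<Rightarrow> nat \<Rightarrow> nat \<Rightarrow> real" where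
  "p0 N t x y = pmf (rw_law N t x) y"

text \<open>Configurations xi : {0..N} -> nat, represented as nat => nat (values off {0..N} ignored).\<close>
definition total :: "nat \<Rightarrow> (nat \<Rightarrow> nat) \<Rightarrow> nat" where
  "total N \<xi> = (\<Sum>x\<le>N. \<xi> x)"

definition particles :: "nat \<Rightarrow> (nat \<Rightarrow> nat) \<Rightarrow> nat list" where
  "particles N \<xi> = concat (map (\<lambda>y. replicate (\<xi> y) y) [0..<Suc N])"

fun indep_walks :: "nat \<Rightarrow> real \<Rightarrow> nat list \<Rightarrow> (nat \<Rightarrow> nat) pmf" where
  "indep_walks N t [] = return_pmf (\<lambda>_. 0)"
| "indep_walks N t (y # ys) =
     bind_pmf (rw_law N t y) (\<lambda>z. bind_pmf (indep_walks N t ys) (\<lambda>c. return_pmf (c(z := c z + 1))))"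

text \<open>Law of xi^0_t under P_xi (independent walks started from xi).\<close>
definition config_law :: "nat \<Rightarrow> real \<Rightarrow> (nat \<Rightarrow> nat) \<Rightarrow> (nat \<Rightarrow> nat) pmf" where
  "config_law N t \<xi> = indep_walks N t (particles N \<xi>)"

text \<open>w(x|xi) with time epsilon^-2 delta = N^2 delta.\<close>
definition w :: "nat \<Rightarrow> real \<Rightarrow> nat \<Rightarrow> (nat \<Rightarrow> nat) \<Rightarrow> real" where
  "w N \<delta> x \<xi> = (\<Sum>y\<le>N. p0 N (real N ^ 2 * \<delta>) x y * real (\<xi> y))"

definition Aavg :: "nat \<Rightarrow> nat \<Rightarrow> (nat \<Rightarrow> real) \<Rightarrow> real" where
  "Aavg l x f = (1 / real l) * (\<Sum>y = x..x + l - 1. f y)"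

definition Xset :: "nat \<Rightarrow> real \<Rightarrow> real \<Rightarrow> (nat \<Rightarrow> nat) set" where
  "Xset N cs as = {\<xi>. real (total N \<xi>) \<le> cs * real N \<and>
                       (\<forall>x\<in>{1..N}. real (\<xi> x) \<le> real N powr as)}"

end

theory Submission
  imports Defs
begin

text \<open>The bound on w(x|xi) is |xi| times the largest transition probability. Since p0 is
  symmetric, w(x|xi) is also the expected number of walkers at x at time epsilon^-2 delta, and
  this number is a sum of independent Bernoulli variables; hence
  E exp(xi_t(x)) <= exp((e - 1) w(x|xi)). As the particle number is conserved, a Chernoff bound
  at level epsilon^-a* and a union bound over the sites show that leaving X has
  stretched-exponentially small probability. The occupation of a window of length l, minus its
  mean Q <= l max w, is a sum of independent centred variables bounded by 1, so its fourth
  moment is at most 3 Q^2 + Q = O(l^2); dividing by l^4 gives O(l^-2) = O(epsilon^(2b)).\<close>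

lemma integral_bind_pmf_finite:
  fixes g :: "'b \<Rightarrow> real"
  assumes fin: "finite (set_pmf p)" and fin2: "\<And>x. x \<in> set_pmf p \<Longrightarrow> finite (set_pmf (f x))"
  shows "measure_pmf.expectation (bind_pmf p f) g
           = measure_pmf.expectation p (\<lambda>x. measure_pmf.expectation (f x) g)"
proof -
  let ?A = "\<Union>x\<in>set_pmf p. set_pmf (f x)"
  have finA: "finite ?A" using fin fin2 by auto
  have "measure_pmf.expectation (bind_pmf p f) g = (\<Sum>a\<in>?A. g a * pmf (bind_pmf p f) a)"
    by (rule integral_measure_pmf_real) (auto simp: finA)
  also have "\<dots> = (\<Sum>a\<in>?A. g a * (\<Sum>x\<in>set_pmf p. pmf (f x) a * pmf p x))"
    by (intro sum.cong refl) (simp add: pmf_bind integral_measure_pmf_real[OF fin])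
  also have "\<dots> = (\<Sum>x\<in>set_pmf p. (\<Sum>a\<in>?A. g a * pmf (f x) a) * pmf p x)"
    by (simp add: sum_distrib_left sum_distrib_right mult_ac) (rule sum.swap)
  also have "\<dots> = (\<Sum>x\<in>set_pmf p. measure_pmf.expectation (f x) g * pmf p x)"
  proof (intro sum.cong refl)
    fix x assume x: "x \<in> set_pmf p"
    have "measure_pmf.expectation (f x) g = (\<Sum>a\<in>?A. g a * pmf (f x) a)"
      by (rule integral_measure_pmf_real) (use x finA in auto)
    then show "(\<Sum>a\<in>?A. g a * pmf (f x) a) * pmf p x = measure_pmf.expectation (f x) g * pmf p x"
      by simp
  qed
  also have "\<dots> = measure_pmf.expectation p (\<lambda>x. measure_pmf.expectation (f x) g)"
    by (rule integral_measure_pmf_real[symmetric]) (auto simp: fin)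
  finally show ?thesis .
qed

lemma pmf_bind_eq_sum:
  assumes "finite A" "set_pmf p \<subseteq> A"
  shows "pmf (bind_pmf p f) y = (\<Sum>z\<in>A. pmf (f z) y * pmf p z)"
  unfolding pmf_bind by (rule integral_measure_pmf_real) (use assms in auto)

lemma prob_less_le_exp_moment:
  fixes X :: "'a \<Rightarrow> real"
  assumes "finite (set_pmf M)"
  shows "measure_pmf.prob M {\<eta>. a < X \<eta>} \<le> measure_pmf.expectation M (\<lambda>\<eta>. exp (X \<eta>)) / exp a"
proof -
  have "measure_pmf.prob M {\<eta>. a < X \<eta>} = measure_pmf.expectation M (indicator {\<eta>. a < X \<eta>})"
    by simp
  also have "\<dots> \<le> measure_pmf.expectation M (\<lambda>\<eta>. exp (X \<eta>) / exp a)"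
  proof (rule integral_mono)
    fix \<eta>
    show "indicator {\<eta>. a < X \<eta>} \<eta> \<le> exp (X \<eta>) / exp a"
      by (cases "a < X \<eta>") simp_all
  qed (use assms in \<open>simp_all add: integrable_measure_pmf_finite\<close>)
  also have "\<dots> = measure_pmf.expectation M (\<lambda>\<eta>. exp (X \<eta>)) / exp a"
    by simp
  finally show ?thesis .
qed

lemma moments_sum_independent:
  fixes X :: "'a \<Rightarrow> real" and D :: "'b \<Rightarrow> real"
  assumes P: "finite (set_pmf P)" and W: "finite (set_pmf W)"
    and X0: "measure_pmf.expectation P X = 0" and D0: "measure_pmf.expectation W D = 0"
  shows "measure_pmf.expectation P (\<lambda>z. measure_pmf.expectation W (\<lambda>c. X z + D c)) = 0"
    and "measure_pmf.expectation P (\<lambda>z. measure_pmf.expectation W (\<lambda>c. (X z + D c)\<^sup>2))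
           = measure_pmf.expectation P (\<lambda>z. (X z)\<^sup>2) + measure_pmf.expectation W (\<lambda>c. (D c)\<^sup>2)"
    and "measure_pmf.expectation P (\<lambda>z. measure_pmf.expectation W (\<lambda>c. (X z + D c) ^ 4))
           = measure_pmf.expectation P (\<lambda>z. (X z) ^ 4)
             + 6 * measure_pmf.expectation P (\<lambda>z. (X z)\<^sup>2) * measure_pmf.expectation W (\<lambda>c. (D c)\<^sup>2)
             + measure_pmf.expectation W (\<lambda>c. (D c) ^ 4)"
proof -
  have expand2: "\<And>a b :: real. (a + b)\<^sup>2 = a\<^sup>2 + 2 * a * b + b\<^sup>2"
    by (simp add: power2_eq_square algebra_simps)
  have expand4: "\<And>a b :: real. (a + b) ^ 4 = a ^ 4 + 4 * a ^ 3 * b + 6 * a\<^sup>2 * b\<^sup>2 + 4 * a * b ^ 3 + b ^ 4"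
    by (simp add: power_def numeral_eq_Suc algebra_simps)
  show "measure_pmf.expectation P (\<lambda>z. measure_pmf.expectation W (\<lambda>c. X z + D c)) = 0"
    using P W X0 D0 by (simp add: integral_add integrable_measure_pmf_finite)
  show "measure_pmf.expectation P (\<lambda>z. measure_pmf.expectation W (\<lambda>c. (X z + D c)\<^sup>2))
           = measure_pmf.expectation P (\<lambda>z. (X z)\<^sup>2) + measure_pmf.expectation W (\<lambda>c. (D c)\<^sup>2)"
    unfolding expand2 using P W X0 D0 by (simp add: integral_add integrable_measure_pmf_finite)
  show "measure_pmf.expectation P (\<lambda>z. measure_pmf.expectation W (\<lambda>c. (X z + D c) ^ 4))
           = measure_pmf.expectation P (\<lambda>z. (X z) ^ 4)
             + 6 * measure_pmf.expectation P (\<lambda>z. (X z)\<^sup>2) * measure_pmf.expectation W (\<lambda>c. (D c)\<^sup>2)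
             + measure_pmf.expectation W (\<lambda>c. (D c) ^ 4)"
    unfolding expand4 using P W X0 D0 by (simp add: integral_add integrable_measure_pmf_finite)
qed

section \<open>The reflected random walk\<close>

definition rw_iter :: "nat \<Rightarrow> nat \<Rightarrow> nat pmf \<Rightarrow> nat pmf" where
  "rw_iter N k q = ((\<lambda>q. bind_pmf q (rw_step N)) ^^ k) q"

lemma rw_law_eq_bind_rw_iter: "rw_law N t x = bind_pmf (poisson_pmf t) (\<lambda>k. rw_iter N k (return_pmf x))"
  by (simp add: rw_law_def rw_iter_def)

lemma rw_iter_Suc: "rw_iter N (Suc k) q = bind_pmf (rw_iter N k q) (rw_step N)"
  by (simp add: rw_iter_def)

lemma rw_iter_Suc_right: "rw_iter N (Suc k) q = rw_iter N k (bind_pmf q (rw_step N))"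
  by (simp add: rw_iter_def funpow_Suc_right del: funpow.simps)

lemma rw_iter_eq_bind: "rw_iter N k q = bind_pmf q (\<lambda>z. rw_iter N k (return_pmf z))"
proof (induction k arbitrary: q)
  case 0 then show ?case by (simp add: rw_iter_def bind_return_pmf')
next
  case (Suc k)
  have "rw_iter N (Suc k) q = bind_pmf (bind_pmf q (\<lambda>z. rw_iter N k (return_pmf z))) (rw_step N)"
    unfolding rw_iter_Suc by (subst Suc.IH) (rule refl)
  also have "\<dots> = bind_pmf q (\<lambda>z. rw_iter N (Suc k) (return_pmf z))"
    unfolding bind_assoc_pmf rw_iter_Suc ..
  finally show ?case .
qed

lemma set_pmf_rw_step: "y \<le> N \<Longrightarrow> set_pmf (rw_step N y) \<subseteq> {..N}"
  by (auto simp: rw_step_def)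

lemma set_pmf_rw_iter: "set_pmf q \<subseteq> {..N} \<Longrightarrow> set_pmf (rw_iter N k q) \<subseteq> {..N}"
proof (induction k)
  case 0 then show ?case by (simp add: rw_iter_def)
next
  case (Suc k)
  then show ?case
    unfolding rw_iter_Suc set_bind_pmf using set_pmf_rw_step by blast
qed

lemma set_pmf_rw_law: "x \<le> N \<Longrightarrow> set_pmf (rw_law N t x) \<subseteq> {..N}"
  unfolding rw_law_eq_bind_rw_iter set_bind_pmf using set_pmf_rw_iter[of "return_pmf x" N] by auto

lemma finite_set_pmf_rw_law: "x \<le> N \<Longrightarrow> finite (set_pmf (rw_law N t x))"
  using finite_subset[OF set_pmf_rw_law] by blast

lemma pmf_map_bernoulli_half:
  "pmf (map_pmf g (bernoulli_pmf (1/2))) z = (of_bool (g True = z) + of_bool (g False = z)) / (2::real)"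
proof -
  have "pmf (map_pmf g (bernoulli_pmf (1/2))) z = (\<Sum>b\<in>{b\<in>UNIV. g b = z}. pmf (bernoulli_pmf (1/2)) b)"
    unfolding pmf_map by (subst measure_measure_pmf_finite[symmetric]) (simp_all add: vimage_def)
  also have "\<dots> = (\<Sum>b\<in>(UNIV::bool set). if g b = z then pmf (bernoulli_pmf (1/2)) b else 0)"
    by (rule sum.inter_filter) simp
  finally show ?thesis by (simp add: UNIV_bool pmf_bernoulli_half)
qed

lemma pmf_rw_step: "pmf (rw_step N y) z =
   (of_bool ((if y < N then y + 1 else y) = z) + of_bool ((if 0 < y then y - 1 else y) = z)) / 2"
  unfolding rw_step_def pmf_map_bernoulli_half by (simp only: if_True if_False)

lemma pmf_rw_step_sym:
  assumes "y \<le> N" "z \<le> N" shows "pmf (rw_step N y) z = pmf (rw_step N z) y"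
proof (cases "y = z")
  case False
  have 1: "((if y < N then y + 1 else y) = z) = ((if 0 < z then z - 1 else z) = y)"
    using False assms by (cases "y < N"; cases "0 < z"; simp; linarith)
  have 2: "((if 0 < y then y - 1 else y) = z) = ((if z < N then z + 1 else z) = y)"
    using False assms by (cases "z < N"; cases "0 < y"; simp; linarith)
  show ?thesis unfolding pmf_rw_step 1 2 by (simp only: add.commute)
qed simp

lemma pmf_rw_iter_sym:
  "x \<le> N \<Longrightarrow> y \<le> N \<Longrightarrow> pmf (rw_iter N k (return_pmf x)) y = pmf (rw_iter N k (return_pmf y)) x"
proof (induction k arbitrary: x y)
  case 0 then show ?case by (simp add: rw_iter_def pmf_return split: split_indicator)
next
  case (Suc k)
  have support: "set_pmf (rw_iter N k (return_pmf x)) \<subseteq> {..N}"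
    by (rule set_pmf_rw_iter) (use Suc.prems in simp)
  have "pmf (rw_iter N (Suc k) (return_pmf x)) y
        = (\<Sum>z\<le>N. pmf (rw_step N z) y * pmf (rw_iter N k (return_pmf x)) z)"
    unfolding rw_iter_Suc by (rule pmf_bind_eq_sum) (use support in auto)
  also have "\<dots> = (\<Sum>z\<le>N. pmf (rw_iter N k (return_pmf z)) x * pmf (rw_step N y) z)"
  proof (intro sum.cong refl)
    fix z assume "z \<in> {..N}"
    then show "pmf (rw_step N z) y * pmf (rw_iter N k (return_pmf x)) z
             = pmf (rw_iter N k (return_pmf z)) x * pmf (rw_step N y) z"
      using Suc.IH[OF Suc.prems(1)] pmf_rw_step_sym[OF _ Suc.prems(2)] by simp
  qed
  also have "\<dots> = pmf (bind_pmf (rw_step N y) (\<lambda>z. rw_iter N k (return_pmf z))) x"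
    by (rule pmf_bind_eq_sum[symmetric]) (use set_pmf_rw_step[OF Suc.prems(2)] in auto)
  also have "\<dots> = pmf (rw_iter N (Suc k) (return_pmf y)) x"
    by (simp only: rw_iter_Suc_right bind_return_pmf rw_iter_eq_bind[of N k "rw_step N y"])
  finally show ?case .
qed

text \<open>Each jump kernel is symmetric, hence so are its iterates and their Poisson mixture.\<close>
lemma p0_sym: "x \<le> N \<Longrightarrow> y \<le> N \<Longrightarrow> p0 N t x y = p0 N t y x"
  unfolding p0_def rw_law_eq_bind_rw_iter pmf_bind
  by (intro Bochner_Integration.integral_cong refl pmf_rw_iter_sym)

lemma indep_walks_Cons: "indep_walks N t (y # ys) =
  bind_pmf (rw_law N t y) (\<lambda>z. map_pmf (\<lambda>c. c(z := c z + 1)) (indep_walks N t ys))"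
  by (simp add: map_pmf_def)

lemma finite_set_pmf_indep_walks: "set ys \<subseteq> {..N} \<Longrightarrow> finite (set_pmf (indep_walks N t ys))"
proof (induction ys)
  case (Cons y ys)
  then show ?case using finite_set_pmf_rw_law[of y N t]
    by (simp only: indep_walks_Cons set_bind_pmf set_map_pmf) auto
qed simp

lemma expectation_indep_walks_Cons:
  fixes g :: "(nat \<Rightarrow> nat) \<Rightarrow> real"
  assumes "set (y # ys) \<subseteq> {..N}"
  shows "measure_pmf.expectation (indep_walks N t (y # ys)) g =
    measure_pmf.expectation (rw_law N t y)
      (\<lambda>z. measure_pmf.expectation (indep_walks N t ys) (\<lambda>c. g (c(z := c z + 1))))"
  unfolding indep_walks_Cons using assms
  by (subst integral_bind_pmf_finite) (auto simp: finite_set_pmf_rw_law finite_set_pmf_indep_walks)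

lemma total_indep_walks:
  "set ys \<subseteq> {..N} \<Longrightarrow> \<eta> \<in> set_pmf (indep_walks N t ys) \<Longrightarrow> total N \<eta> = length ys"
proof (induction ys arbitrary: \<eta>)
  case (Cons y ys)
  from Cons.prems(2) obtain z c where z: "z \<in> set_pmf (rw_law N t y)"
    and c: "c \<in> set_pmf (indep_walks N t ys)" and \<eta>: "\<eta> = c(z := c z + 1)"
    by (auto simp: indep_walks_Cons)
  have "z \<le> N" using set_pmf_rw_law z Cons.prems(1) by auto
  then have "total N \<eta> = total N c + 1"
    unfolding \<eta> total_def by (simp add: sum.remove[of "{..N}" z])
  then show ?case using Cons c by simp
qed (simp add: total_def)

lemma sum_list_particles: "(\<Sum>y\<leftarrow>particles N \<xi>. f y) = (\<Sum>y\<le>N. real (\<xi> y) * (f y :: real))"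
  by (induction N) (simp_all add: particles_def sum_list_replicate)

lemma length_particles: "length (particles N \<xi>) = total N \<xi>"
  by (induction N) (simp_all add: particles_def total_def)

lemma set_particles: "set (particles N \<xi>) \<subseteq> {..N}"
  by (auto simp: particles_def)

lemma total_config_law: "\<eta> \<in> set_pmf (config_law N t \<xi>) \<Longrightarrow> total N \<eta> = total N \<xi>"
  unfolding config_law_def using total_indep_walks[OF set_particles] by (simp add: length_particles)

lemma sum_list_particles_p0:
  "x \<le> N \<Longrightarrow> (\<Sum>y\<leftarrow>particles N \<xi>. p0 N (real N ^ 2 * \<delta>) y x) = w N \<delta> x \<xi>"
  unfolding sum_list_particles w_def by (intro sum.cong refl) (simp add: p0_sym)

section \<open>Overcrowding of single sites\<close>

text \<open>A walker contributes the factor 1 + (e - 1) p0 <= exp ((e - 1) p0).\<close>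
lemma expectation_exp_indep_walks_le:
  assumes "set ys \<subseteq> {..N}"
  shows "measure_pmf.expectation (indep_walks N t ys) (\<lambda>\<eta>. exp (real (\<eta> x)))
         \<le> exp ((exp 1 - 1) * (\<Sum>y\<leftarrow>ys. p0 N t y x))"
  using assms
proof (induction ys)
  case (Cons y ys)
  define M where "M = measure_pmf.expectation (indep_walks N t ys) (\<lambda>\<eta>. exp (real (\<eta> x)))"
  have "y \<le> N" "set ys \<subseteq> {..N}" using Cons.prems by auto
  then have M: "0 \<le> M" "M \<le> exp ((exp 1 - 1) * (\<Sum>y\<leftarrow>ys. p0 N t y x))"
    using Cons.IH by (simp_all add: M_def)
  have step: "\<And>c z. exp (real ((c(z := c z + 1)) x))
                       = (1 + (exp 1 - 1) * indicator {x} z) * exp (real (c x))"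
    by (auto simp: exp_add split: split_indicator)
  have "measure_pmf.expectation (indep_walks N t (y # ys)) (\<lambda>\<eta>. exp (real (\<eta> x)))
     = measure_pmf.expectation (rw_law N t y) (\<lambda>z. (1 + (exp 1 - 1) * indicator {x} z) * M)"
    unfolding expectation_indep_walks_Cons[OF Cons.prems] step by (simp add: M_def)
  also have "\<dots> = (1 + (exp 1 - 1) * p0 N t y x) * M"
    using finite_set_pmf_rw_law[OF \<open>y \<le> N\<close>]
    by (simp add: integral_add integrable_measure_pmf_finite measure_pmf_single p0_def)
  also have "\<dots> \<le> exp ((exp 1 - 1) * p0 N t y x) * exp ((exp 1 - 1) * (\<Sum>y\<leftarrow>ys. p0 N t y x))"
    using M by (intro mult_mono exp_ge_add_one_self) auto
  also have "\<dots> = exp ((exp 1 - 1) * (\<Sum>y\<leftarrow>y # ys. p0 N t y x))"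
    by (simp add: exp_add[symmetric] algebra_simps)
  finally show ?case .
qed simp

text \<open>The particle number is conserved, so leaving Xset means overcrowding one of the
  sites 1..N; each of these events is controlled by a Chernoff bound.\<close>
lemma prob_config_law_Xset_ge:
  assumes total: "real (total N \<xi>) \<le> cs * real N"
    and wK: "\<And>x. x \<le> N \<Longrightarrow> w N \<delta> x \<xi> \<le> K"
  shows "measure_pmf.prob (config_law N (real N ^ 2 * \<delta>) \<xi>) (Xset N cs as)
          \<ge> 1 - real N * (exp ((exp 1 - 1) * K) / exp (real N powr as))"
proof -
  define M where "M = config_law N (real N ^ 2 * \<delta>) \<xi>"
  define E where "E = exp ((exp 1 - 1) * K) / exp (real N powr as)"
  define Crowded where "Crowded x = {\<eta>. real N powr as < real (\<eta> x)}" for x :: nat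
  have fin: "finite (set_pmf M)"
    unfolding M_def config_law_def by (rule finite_set_pmf_indep_walks[OF set_particles])
  have "(UNIV - Xset N cs as) \<inter> set_pmf M \<subseteq> (\<Union>x\<in>{1..N}. Crowded x)"
  proof
    fix \<eta> assume \<eta>: "\<eta> \<in> (UNIV - Xset N cs as) \<inter> set_pmf M"
    then have "total N \<eta> = total N \<xi>" unfolding M_def by (blast intro: total_config_law)
    with \<eta> total obtain x where "x \<in> {1..N}" "\<not> real (\<eta> x) \<le> real N powr as"
      by (auto simp: Xset_def)
    then show "\<eta> \<in> (\<Union>x\<in>{1..N}. Crowded x)" unfolding Crowded_def by (blast intro: not_le_imp_less)
  qed
  then have "measure_pmf.prob M (UNIV - Xset N cs as) \<le> measure_pmf.prob M (\<Union>x\<in>{1..N}. Crowded x)"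
    by (subst measure_Int_set_pmf[symmetric]) (rule measure_pmf.finite_measure_mono, simp_all)
  also have "\<dots> \<le> (\<Sum>x\<in>{1..N}. measure_pmf.prob M (Crowded x))"
    by (rule measure_pmf.finite_measure_subadditive_finite) auto
  also have "\<dots> \<le> (\<Sum>x\<in>{1..N}. E)"
  proof (rule sum_mono)
    fix x assume x: "x \<in> {1..N}"
    have "measure_pmf.prob M (Crowded x)
          \<le> measure_pmf.expectation M (\<lambda>\<eta>. exp (real (\<eta> x))) / exp (real N powr as)"
      unfolding Crowded_def by (rule prob_less_le_exp_moment[OF fin])
    also have "\<dots> \<le> exp ((exp 1 - 1) * w N \<delta> x \<xi>) / exp (real N powr as)"
      using expectation_exp_indep_walks_le[OF set_particles, of N "real N ^ 2 * \<delta>" \<xi> x] x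
      by (simp add: M_def config_law_def sum_list_particles_p0 divide_right_mono)
    also have "\<dots> \<le> E"
      using wK[of x] x by (simp add: E_def divide_right_mono)
    finally show "measure_pmf.prob M (Crowded x) \<le> E" .
  qed
  finally have "measure_pmf.prob M (UNIV - Xset N cs as) \<le> real N * E" by simp
  then show ?thesis
    using measure_pmf.prob_compl[of "Xset N cs as" M] by (simp add: M_def E_def Compl_eq_Diff_UNIV)
qed

section \<open>Fourth moments of window averages\<close>

definition window_prob :: "nat \<Rightarrow> real \<Rightarrow> nat set \<Rightarrow> nat \<Rightarrow> real" where
  "window_prob N t W y = measure_pmf.prob (rw_law N t y) W"

definition occupation :: "nat set \<Rightarrow> (nat \<Rightarrow> nat) \<Rightarrow> real" where
  "occupation W \<eta> = (\<Sum>u\<in>W. real (\<eta> u))"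

definition centred_occupation :: "nat \<Rightarrow> real \<Rightarrow> nat set \<Rightarrow> nat list \<Rightarrow> (nat \<Rightarrow> nat) \<Rightarrow> real" where
  "centred_occupation N t W ys \<eta> = occupation W \<eta> - (\<Sum>y\<leftarrow>ys. window_prob N t W y)"

lemma window_prob_nonneg: "0 \<le> window_prob N t W y"
  and window_prob_le_1: "window_prob N t W y \<le> 1"
  by (simp_all add: window_prob_def)

lemma centred_occupation_Cons:
  assumes "finite W"
  shows "centred_occupation N t W (y # ys) (c(z := c z + 1))
           = (indicator W z - window_prob N t W y) + centred_occupation N t W ys c"
proof -
  have "occupation W (c(z := c z + 1)) = occupation W c + (\<Sum>u\<in>W. if u = z then 1 else 0)"
    unfolding occupation_def sum.distrib[symmetric] by (intro sum.cong) auto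
  also have "(\<Sum>u\<in>W. if u = z then 1 else 0) = (indicator W z :: real)"
    using assms by (simp add: sum.delta' split: split_indicator)
  finally show ?thesis by (simp add: centred_occupation_def fun_upd_def)
qed

lemma
  assumes "y \<le> N"
  shows expectation_centred_indicator:
      "measure_pmf.expectation (rw_law N t y) (\<lambda>z. indicator W z - window_prob N t W y) = 0"
    and expectation_centred_indicator_power2_le:
      "measure_pmf.expectation (rw_law N t y) (\<lambda>z. (indicator W z - window_prob N t W y)\<^sup>2)
         \<le> window_prob N t W y"
    and expectation_centred_indicator_power4_le:
      "measure_pmf.expectation (rw_law N t y) (\<lambda>z. (indicator W z - window_prob N t W y) ^ 4)
         \<le> window_prob N t W y"
proof -
  define q where "q = window_prob N t W y"
  have q: "0 \<le> q" "q \<le> 1" by (simp_all add: q_def window_prob_nonneg window_prob_le_1)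
  have fin: "finite (set_pmf (rw_law N t y))" by (rule finite_set_pmf_rw_law[OF assms])
  show "measure_pmf.expectation (rw_law N t y) (\<lambda>z. indicator W z - window_prob N t W y) = 0"
    using fin by (simp add: integrable_measure_pmf_finite window_prob_def)
  have square: "(\<lambda>z. (indicator W z - q)\<^sup>2) = (\<lambda>z. (1 - 2 * q) * indicator W z + q\<^sup>2)"
    by (rule ext) (auto simp: power2_eq_square algebra_simps split: split_indicator)
  have "measure_pmf.expectation (rw_law N t y) (\<lambda>z. (indicator W z - q)\<^sup>2) = (1 - 2 * q) * q + q\<^sup>2"
    unfolding square using fin by (simp add: integrable_measure_pmf_finite q_def window_prob_def)
  also have "\<dots> \<le> q" using q by (simp add: power2_eq_square algebra_simps)
  finally show power2: "measure_pmf.expectation (rw_law N t y) (\<lambda>z. (indicator W z - q)\<^sup>2) \<le> q" .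
  have "(indicator W z - q)\<^sup>2 \<le> 1" for z
    using q by (simp add: abs_square_le_1 split: split_indicator)
  then have "(indicator W z - q)\<^sup>2 * (indicator W z - q)\<^sup>2 \<le> 1 * (indicator W z - q)\<^sup>2" for z
    by (intro mult_right_mono) simp_all
  then have "(indicator W z - q) ^ 4 \<le> (indicator W z - q)\<^sup>2" for z
    by (simp add: power2_eq_square power4_eq_xxxx mult.assoc)
  then have "measure_pmf.expectation (rw_law N t y) (\<lambda>z. (indicator W z - q) ^ 4)
      \<le> measure_pmf.expectation (rw_law N t y) (\<lambda>z. (indicator W z - q)\<^sup>2)"
    using fin by (intro integral_mono) (simp_all add: integrable_measure_pmf_finite)
  with power2 show "measure_pmf.expectation (rw_law N t y) (\<lambda>z. (indicator W z - q) ^ 4) \<le> q"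
    by linarith
qed

lemma centred_occupation_moments:
  assumes "set ys \<subseteq> {..N}" and W: "finite W"
  shows "measure_pmf.expectation (indep_walks N t ys) (centred_occupation N t W ys) = 0
       \<and> measure_pmf.expectation (indep_walks N t ys) (\<lambda>\<eta>. (centred_occupation N t W ys \<eta>)\<^sup>2)
           \<le> (\<Sum>y\<leftarrow>ys. window_prob N t W y)
       \<and> measure_pmf.expectation (indep_walks N t ys) (\<lambda>\<eta>. (centred_occupation N t W ys \<eta>) ^ 4)
           \<le> 3 * (\<Sum>y\<leftarrow>ys. window_prob N t W y)\<^sup>2 + (\<Sum>y\<leftarrow>ys. window_prob N t W y)"
  using assms(1)
proof (induction ys)
  case Nil then show ?case by (simp add: centred_occupation_def occupation_def)
next
  case (Cons y ys)
  have y: "y \<le> N" and ys: "set ys \<subseteq> {..N}" using Cons.prems by auto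
  define P where "P = rw_law N t y"
  define V where "V = indep_walks N t ys"
  define X where "X = (\<lambda>z. indicator W z - window_prob N t W y)"
  define D where "D = centred_occupation N t W ys"
  define q where "q = window_prob N t W y"
  define Q where "Q = (\<Sum>y\<leftarrow>ys. window_prob N t W y)"
  have finP: "finite (set_pmf P)" unfolding P_def by (rule finite_set_pmf_rw_law[OF y])
  have finV: "finite (set_pmf V)" unfolding V_def by (rule finite_set_pmf_indep_walks[OF ys])
  have D: "measure_pmf.expectation V D = 0" "measure_pmf.expectation V (\<lambda>c. (D c)\<^sup>2) \<le> Q"
    "measure_pmf.expectation V (\<lambda>c. (D c) ^ 4) \<le> 3 * Q\<^sup>2 + Q"
    using Cons.IH[OF ys] by (simp_all add: V_def D_def Q_def)
  have X: "measure_pmf.expectation P X = 0" "measure_pmf.expectation P (\<lambda>z. (X z)\<^sup>2) \<le> q"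
    "measure_pmf.expectation P (\<lambda>z. (X z) ^ 4) \<le> q"
    using expectation_centred_indicator[OF y] expectation_centred_indicator_power2_le[OF y]
      expectation_centred_indicator_power4_le[OF y]
    by (simp_all add: P_def X_def q_def)
  have q: "0 \<le> q" "q \<le> 1" by (simp_all add: q_def window_prob_nonneg window_prob_le_1)
  have E: "\<And>g :: real \<Rightarrow> real.
      measure_pmf.expectation (indep_walks N t (y # ys)) (\<lambda>\<eta>. g (centred_occupation N t W (y # ys) \<eta>))
      = measure_pmf.expectation P (\<lambda>z. measure_pmf.expectation V (\<lambda>c. g (X z + D c)))"
    unfolding expectation_indep_walks_Cons[OF Cons.prems] centred_occupation_Cons[OF W]
    by (simp add: P_def V_def X_def D_def)
  note moments = moments_sum_independent[OF finP finV X(1) D(1)]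
  have "0 \<le> measure_pmf.expectation P (\<lambda>z. (X z)\<^sup>2)" "0 \<le> measure_pmf.expectation V (\<lambda>c. (D c)\<^sup>2)"
    by simp_all
  then have "measure_pmf.expectation P (\<lambda>z. (X z)\<^sup>2) * measure_pmf.expectation V (\<lambda>c. (D c)\<^sup>2) \<le> q * Q"
    using X(2) D(2) q by (intro mult_mono) auto
  moreover have "q + 6 * (q * Q) + (3 * Q\<^sup>2 + Q) \<le> 3 * (q + Q)\<^sup>2 + (q + Q)"
    using q by (simp add: power2_eq_square algebra_simps)
  ultimately show ?case
    using E[of "\<lambda>x. x"] E[of "\<lambda>x. x\<^sup>2"] E[of "\<lambda>x. x ^ 4"] moments X D
    by (simp add: q_def Q_def)
qed

lemma w_nonneg: "0 \<le> w N \<delta> x \<xi>"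
  unfolding w_def by (intro sum_nonneg mult_nonneg_nonneg) (simp_all add: p0_def)

lemma sum_w_eq_sum_window_prob:
  assumes "W \<subseteq> {..N}"
  shows "(\<Sum>u\<in>W. w N \<delta> u \<xi>) = (\<Sum>y\<leftarrow>particles N \<xi>. window_prob N (real N ^ 2 * \<delta>) W y)"
proof -
  have fin: "finite W" using assms finite_subset by blast
  have "(\<Sum>u\<in>W. w N \<delta> u \<xi>) = (\<Sum>y\<le>N. real (\<xi> y) * (\<Sum>u\<in>W. p0 N (real N ^ 2 * \<delta>) u y))"
    unfolding w_def by (subst sum.swap) (simp add: sum_distrib_left mult.commute)
  also have "\<dots> = (\<Sum>y\<le>N. real (\<xi> y) * window_prob N (real N ^ 2 * \<delta>) W y)"
  proof (intro sum.cong refl arg_cong2[where f = "(*)"])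
    fix y assume "y \<in> {..N}"
    then have "(\<Sum>u\<in>W. p0 N (real N ^ 2 * \<delta>) u y) = (\<Sum>u\<in>W. p0 N (real N ^ 2 * \<delta>) y u)"
      using assms by (intro sum.cong refl p0_sym) auto
    then show "(\<Sum>u\<in>W. p0 N (real N ^ 2 * \<delta>) u y) = window_prob N (real N ^ 2 * \<delta>) W y"
      by (simp add: window_prob_def p0_def measure_measure_pmf_finite[OF fin])
  qed
  finally show ?thesis by (simp add: sum_list_particles)
qed

lemma fourth_moment_Aavg_le:
  assumes l: "1 \<le> l" and x: "x + l \<le> N + 1"
    and wK: "\<And>u. u \<le> N \<Longrightarrow> w N \<delta> u \<xi> \<le> K"
  shows "measure_pmf.expectation (config_law N (real N ^ 2 * \<delta>) \<xi>)
           (\<lambda>\<eta>. \<bar>Aavg l x (\<lambda>y. real (\<eta> y)) - Aavg l x (\<lambda>y. w N \<delta> y \<xi>)\<bar> ^ 4)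
         \<le> (3 * K\<^sup>2 + K) / (real l)\<^sup>2"
proof -
  define t where "t = real N ^ 2 * \<delta>"
  define W where "W = {x..x + l - 1}"
  define ys where "ys = particles N \<xi>"
  define Q where "Q = (\<Sum>y\<leftarrow>ys. window_prob N t W y)"
  have W: "W \<subseteq> {..N}" "finite W" "card W = l" using x l by (auto simp: W_def)
  have l_pos: "0 < real l" using l by simp
  have K: "0 \<le> K" using wK[of x] w_nonneg[of N \<delta> x \<xi>] x l by simp
  have Q: "0 \<le> Q" "Q \<le> real l * K"
  proof -
    show "0 \<le> Q" unfolding Q_def by (rule sum_list_nonneg) (auto simp: window_prob_nonneg)
    have "Q = (\<Sum>u\<in>W. w N \<delta> u \<xi>)"
      unfolding Q_def ys_def t_def by (rule sum_w_eq_sum_window_prob[OF W(1), symmetric])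
    also have "\<dots> \<le> (\<Sum>u\<in>W. K)" using wK W(1) by (intro sum_mono) auto
    also have "\<dots> = real l * K" using W(3) by simp
    finally show "Q \<le> real l * K" .
  qed
  have difference: "Aavg l x (\<lambda>y. real (\<eta> y)) - Aavg l x (\<lambda>y. w N \<delta> y \<xi>)
      = centred_occupation N t W ys \<eta> / real l" for \<eta>
    using sum_w_eq_sum_window_prob[OF W(1), of \<delta> \<xi>]
    by (simp add: Aavg_def centred_occupation_def occupation_def W_def Q_def ys_def t_def
        diff_divide_distrib)
  have "measure_pmf.expectation (config_law N t \<xi>)
          (\<lambda>\<eta>. \<bar>Aavg l x (\<lambda>y. real (\<eta> y)) - Aavg l x (\<lambda>y. w N \<delta> y \<xi>)\<bar> ^ 4)
        = measure_pmf.expectation (indep_walks N t ys) (\<lambda>\<eta>. (centred_occupation N t W ys \<eta>) ^ 4) / real l ^ 4"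
    by (simp add: difference power_even_abs power_divide config_law_def ys_def)
  also have "\<dots> \<le> (3 * Q\<^sup>2 + Q) / real l ^ 4"
    using centred_occupation_moments[OF _ W(2), of ys N t] set_particles
    by (intro divide_right_mono) (simp_all add: Q_def ys_def)
  also have "\<dots> \<le> (3 * (real l * K)\<^sup>2 + real l * K) / real l ^ 4"
  proof (rule divide_right_mono)
    have "Q\<^sup>2 \<le> (real l * K)\<^sup>2" by (rule power_mono[OF Q(2) Q(1)])
    then show "3 * Q\<^sup>2 + Q \<le> 3 * (real l * K)\<^sup>2 + real l * K" using Q(2) by linarith
  qed simp
  also have "\<dots> = (3 * K\<^sup>2 + K / real l) / (real l)\<^sup>2"
    using l_pos by (simp add: field_simps power2_eq_square power4_eq_xxxx)
  also have "\<dots> \<le> (3 * K\<^sup>2 + K) / (real l)\<^sup>2"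
    using K l by (intro divide_right_mono) (simp_all add: divide_le_eq mult_le_cancel_left1)
  finally show ?thesis by (simp add: t_def)
qed

lemma power_div_fact_le_exp:
  fixes v :: real
  assumes "0 \<le> v" shows "v ^ k / fact k \<le> exp v"
proof -
  have "v ^ k / fact k \<le> (\<Sum>n\<le>k. v ^ n / fact n)"
    by (rule member_le_sum[where f = "\<lambda>n. v ^ n / fact n"]) (use assms in auto)
  also have "\<dots> \<le> exp v"
    using assms summable_exp_generic[of v]
    by (auto simp: exp_def divide_inverse ac_simps intro!: sum_le_suminf)
  finally show ?thesis .
qed

lemma stretched_exp_decay:
  fixes as :: real and n :: int
  assumes as: "as > 0"
  obtains C where "\<And>N::nat. N \<ge> 1 \<Longrightarrow> real N / exp (real N powr as) \<le> C * (1 / real N) powi n"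
proof -
  define m where "m = nat n"
  define k where "k = nat \<lceil>real (m + 1) / as\<rceil>"
  have k: "real (m + 1) \<le> as * real k"
  proof -
    have "real (m + 1) / as \<le> real k" unfolding k_def by linarith
    then show ?thesis using as by (simp add: field_simps)
  qed
  have "real N / exp (real N powr as) \<le> fact k * (1 / real N) powi n" if N: "N \<ge> 1" for N :: nat
  proof -
    have N_pos: "0 < real N" using N by simp
    have "real N ^ (m + 1) = real N powr real (m + 1)" by (rule powr_realpow[OF N_pos, symmetric])
    also have "\<dots> \<le> real N powr (as * real k)" by (rule powr_mono) (use k N in auto)
    also have "\<dots> = (real N powr as) ^ k" using N_pos by (simp add: powr_powr[symmetric] powr_realpow)
    also have "\<dots> \<le> fact k * exp (real N powr as)"
      using power_div_fact_le_exp[of "real N powr as" k] by (simp add: divide_le_eq mult.commute)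
    finally have "real N / exp (real N powr as) \<le> fact k / real N ^ m"
      using N_pos by (simp add: divide_le_eq le_divide_eq mult.commute mult.left_commute)
    also have "\<dots> = fact k * (1 / real N) powi int m" by (simp add: power_one_over)
    also have "\<dots> \<le> fact k * (1 / real N) powi n"
      using N by (intro mult_left_mono power_int_decreasing) (simp_all add: m_def)
    finally show ?thesis .
  qed
  then show thesis by (rule that)
qed

lemma half_le_nat_floor:
  fixes v :: real
  assumes "1 \<le> v" shows "v / 2 \<le> real (nat \<lfloor>v\<rfloor>)"
proof -
  have "v - 1 < real_of_int \<lfloor>v\<rfloor>" "1 \<le> \<lfloor>v\<rfloor>" using assms by linarith+
  then show ?thesis by linarith
qed

lemma w_le_of_p0_le:
  assumes N: "N \<ge> 1" and \<xi>: "real (total N \<xi>) \<le> cs * real N"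
    and p0_le: "\<And>y. y \<le> N \<Longrightarrow> p0 N (real N ^ 2 * \<delta>) x y \<le> B / real N"
  shows "w N \<delta> x \<xi> \<le> B * cs"
proof -
  have B: "0 \<le> B / real N" using p0_le[of 0] by (simp add: p0_def) (meson order_trans pmf_nonneg)
  have "w N \<delta> x \<xi> \<le> (\<Sum>y\<le>N. B / real N * real (\<xi> y))"
    unfolding w_def by (intro sum_mono mult_right_mono p0_le) simp_all
  also have "\<dots> = B / real N * real (total N \<xi>)"
    by (simp add: total_def sum_distrib_left)
  also have "\<dots> \<le> B / real N * (cs * real N)" by (rule mult_left_mono[OF \<xi> B])
  also have "\<dots> = B * cs" using N by simp
  finally show ?thesis .
qed

lemma config_law_Xset_tail:
  assumes as: "as > 0"
    and wK: "\<And>N \<xi> x. N \<ge> 1 \<Longrightarrow> \<xi> \<in> Xset N cs as \<Longrightarrow> x \<le> N \<Longrightarrow> w N \<delta> x \<xi> \<le> K"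
  shows "\<exists>c'. \<forall>N::nat. N \<ge> 1 \<longrightarrow> (\<forall>\<xi>\<in>Xset N cs as.
           measure_pmf.prob (config_law N (real N ^ 2 * \<delta>) \<xi>) (Xset N cs as)
             \<ge> 1 - c' * (1 / real N) powi n)"
proof -
  obtain C where C: "\<And>N::nat. N \<ge> 1 \<Longrightarrow> real N / exp (real N powr as) \<le> C * (1 / real N) powi n"
    using stretched_exp_decay[OF as] by blast
  define A where "A = exp ((exp 1 - 1) * K)"
  show ?thesis
  proof (intro exI[of _ "A * C"] allI impI ballI)
    fix N :: nat and \<xi> assume N: "N \<ge> 1" and \<xi>: "\<xi> \<in> Xset N cs as"
    have "real N * (A / exp (real N powr as)) = A * (real N / exp (real N powr as))" by simp
    also have "\<dots> \<le> A * (C * (1 / real N) powi n)" by (rule mult_left_mono[OF C[OF N]]) (simp add: A_def)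
    finally have "A * C * (1 / real N) powi n \<ge> real N * (A / exp (real N powr as))"
      by (simp add: mult.assoc)
    moreover have "measure_pmf.prob (config_law N (real N ^ 2 * \<delta>) \<xi>) (Xset N cs as)
        \<ge> 1 - real N * (A / exp (real N powr as))"
      unfolding A_def using \<xi> wK[OF N \<xi>] by (intro prob_config_law_Xset_ge) (simp_all add: Xset_def)
    ultimately show "measure_pmf.prob (config_law N (real N ^ 2 * \<delta>) \<xi>) (Xset N cs as)
        \<ge> 1 - A * C * (1 / real N) powi n" by linarith
  qed
qed

lemma fourth_moment_Aavg_tail:
  assumes b: "b > 0"
    and wK: "\<And>N \<xi> x. N \<ge> 1 \<Longrightarrow> \<xi> \<in> Xset N cs as \<Longrightarrow> x \<le> N \<Longrightarrow> w N \<delta> x \<xi> \<le> K"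
  shows "\<exists>c. \<forall>N::nat. N \<ge> 1 \<longrightarrow> (\<forall>\<xi>\<in>Xset N cs as.
           \<forall>x::nat. x + nat \<lfloor>real N powr b\<rfloor> \<le> N + 1 \<longrightarrow>
             measure_pmf.expectation (config_law N (real N ^ 2 * \<delta>) \<xi>)
               (\<lambda>\<eta>. \<bar>Aavg (nat \<lfloor>real N powr b\<rfloor>) x (\<lambda>y. real (\<eta> y))
                     - Aavg (nat \<lfloor>real N powr b\<rfloor>) x (\<lambda>y. w N \<delta> y \<xi>)\<bar> ^ 4)
             \<le> c * (1 / real N) powr (2 * b))"
proof (intro exI[of _ "4 * (3 * K\<^sup>2 + K)"] allI impI ballI)
  fix N :: nat and \<xi> x assume N: "N \<ge> 1" and \<xi>: "\<xi> \<in> Xset N cs as"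
    and x: "x + nat \<lfloor>real N powr b\<rfloor> \<le> N + 1"
  define v where "v = real N powr b"
  define l where "l = nat \<lfloor>v\<rfloor>"
  have v: "1 \<le> v" unfolding v_def using N b by (intro ge_one_powr_ge_zero) auto
  have l: "1 \<le> l" "v / 2 \<le> real l"
    unfolding l_def using v half_le_nat_floor[OF v] by linarith+
  have K: "0 \<le> K" using wK[OF N \<xi>, of 0] w_nonneg[of N \<delta> 0 \<xi>] by linarith
  have "measure_pmf.expectation (config_law N (real N ^ 2 * \<delta>) \<xi>)
          (\<lambda>\<eta>. \<bar>Aavg l x (\<lambda>y. real (\<eta> y)) - Aavg l x (\<lambda>y. w N \<delta> y \<xi>)\<bar> ^ 4)
        \<le> (3 * K\<^sup>2 + K) / (real l)\<^sup>2"
    by (rule fourth_moment_Aavg_le[OF l(1)]) (use x wK[OF N \<xi>] in \<open>simp_all add: l_def v_def\<close>)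
  also have "\<dots> \<le> (3 * K\<^sup>2 + K) / (v / 2)\<^sup>2"
    using K v l by (intro divide_left_mono power_mono mult_pos_pos) simp_all
  also have "\<dots> = 4 * (3 * K\<^sup>2 + K) * (1 / v\<^sup>2)"
    by (simp add: power2_eq_square)
  also have "1 / v\<^sup>2 = (1 / real N) powr (2 * b)"
    unfolding v_def by (simp only: powr_divide mult_2 powr_add power2_eq_square) simp
  finally show "measure_pmf.expectation (config_law N (real N ^ 2 * \<delta>) \<xi>)
      (\<lambda>\<eta>. \<bar>Aavg (nat \<lfloor>real N powr b\<rfloor>) x (\<lambda>y. real (\<eta> y))
            - Aavg (nat \<lfloor>real N powr b\<rfloor>) x (\<lambda>y. w N \<delta> y \<xi>)\<bar> ^ 4)
      \<le> 4 * (3 * K\<^sup>2 + K) * (1 / real N) powr (2 * b)"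
    unfolding l_def v_def .
qed

theorem mainTheorem8:
  fixes \<delta> c2 cs as b :: real
  assumes "\<delta> > 0" and "cs > 0" and "as > 0"
    and hp: "\<forall>N::nat. N \<ge> 1 \<longrightarrow> (\<forall>x\<le>N. \<forall>y\<le>N.
               p0 N (real N ^ 2 * \<delta>) x y \<le> c2 * (1 / real N) / sqrt \<delta>)"
  shows "(\<forall>N::nat. N \<ge> 1 \<longrightarrow> (\<forall>\<xi>\<in>Xset N cs as. \<forall>x\<le>N. w N \<delta> x \<xi> \<le> c2 * cs / sqrt \<delta>))
    \<and> ((b > 0 \<and> as < b / 2 \<and> b + as < 1) \<longrightarrow>
        ((\<forall>n::int. \<exists>c'. \<forall>N::nat. N \<ge> 1 \<longrightarrow> (\<forall>\<xi>\<in>Xset N cs as.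
            measure_pmf.prob (config_law N (real N ^ 2 * \<delta>) \<xi>) (Xset N cs as)
              \<ge> 1 - c' * (1 / real N) powi n))
        \<and> (\<exists>c. \<forall>N::nat. N \<ge> 1 \<longrightarrow> (\<forall>\<xi>\<in>Xset N cs as.
            \<forall>x::nat. x + nat \<lfloor>real N powr b\<rfloor> \<le> N + 1 \<longrightarrow>
              measure_pmf.expectation (config_law N (real N ^ 2 * \<delta>) \<xi>)
                (\<lambda>\<eta>. \<bar>Aavg (nat \<lfloor>real N powr b\<rfloor>) x (\<lambda>y. real (\<eta> y))
                      - Aavg (nat \<lfloor>real N powr b\<rfloor>) x (\<lambda>y. w N \<delta> y \<xi>)\<bar> ^ 4)
              \<le> c * (1 / real N) powr (2 * b)))))"
proof -
  have w_le: "w N \<delta> x \<xi> \<le> c2 * cs / sqrt \<delta>"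
    if N: "N \<ge> 1" and \<xi>: "\<xi> \<in> Xset N cs as" and x: "x \<le> N" for N \<xi> x
  proof -
    have "w N \<delta> x \<xi> \<le> c2 / sqrt \<delta> * cs"
      using hp N x \<xi> by (intro w_le_of_p0_le) (auto simp: Xset_def mult.commute)
    then show ?thesis by simp
  qed
  show ?thesis
    using w_le config_law_Xset_tail[OF \<open>as > 0\<close> w_le] fourth_moment_Aavg_tail[OF _ w_le] by blast
qed

end
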